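(* Let $y$ be a single real variable and $x=(x_1,\dots,x_n)$ real variables, and let $f(x,y)\in\mathbb R[x,y]$. Assume that for every $y_0\in\mathbb R$ the specialized polynomial $f(\cdot,y_0)\in\mathbb R[x]$ is a square in $\mathbb R[x]$. Then there exist $g(y)\in\mathbb R[y]$ and $h(x,y)\in\mathbb R[x,y]$ such that \[ f(x,y)=g(y)\,h(x,y)^2. \] *)

theory Defs
  imports "HOL-Library.Poly_Mapping" "HOL-Computational_Algebra.Polynomial"
begin

text \<open>Real polynomials in variables x_0, x_1, ... : finitely supported maps from
  monomials (exponent vectors) to real coefficients, with the
  convolution product of HOL-Library.Poly_Mapping.\<close>
type_synonym rmpoly = "(nat \<Rightarrow>\<^sub>0 nat) \<Rightarrow>\<^sub>0 real"

text \<open>p lies in R[x_1,...,x_n] (variables indexed 0..n-1).\<close>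
definition in_vars :: "nat \<Rightarrow> rmpoly \<Rightarrow> bool" where
  "in_vars n p \<longleftrightarrow> (\<forall>m \<in> Poly_Mapping.keys p. Poly_Mapping.keys m \<subseteq> {..<n})"

definition const_mp :: "real \<Rightarrow> rmpoly" where
  "const_mp c = Poly_Mapping.single 0 c"

end

theory Submission
  imports Defs "HOL-Computational_Algebra.Polynomial_Factorial" "HOL-Computational_Algebra.Field_as_Ring"
begin

text \<open>
  The Kronecker substitution \<open>x\<^sub>i \<mapsto> t^(D^i)\<close> is a ring homomorphism from \<open>\<real>[x\<^sub>1,...,x\<^sub>n]\<close>
  to \<open>\<real>[t]\<close> that is injective on polynomials all of whose exponents are below \<open>D\<close>.
  Applied to the coefficients of \<open>f(x, y)\<close> it yields a bivariate polynomial \<open>G(t, y)\<close> all of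
  whose specializations \<open>G(t, y\<^sub>0)\<close> are squares. Over a field of characteristic 0 this forces
  \<open>G = g(y) H(t, y)\<^sup>2\<close>: if a prime factor \<open>p\<close> of positive degree in \<open>t\<close> divided \<open>G\<close> only
  once, then at a generic point \<open>y\<^sub>0\<close> the specialization of \<open>p\<close> would be squarefree and coprime
  to that of \<open>G / p\<close>, so \<open>G(t, y\<^sub>0)\<close> would not be a square.

  Now take square roots \<open>q\<^sub>j\<close> of \<open>f(x, y\<^sub>j) \<noteq> 0\<close> at \<open>deg\<^sub>y f + 1\<close> points \<open>y\<^sub>j\<close>, let \<open>E\<close> bound
  the exponents of \<open>f\<close> and of all \<open>q\<^sub>j\<close>, and take \<open>D > 2E\<close>. Each \<open>H(t, y\<^sub>j)\<close> is a scalar multiple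
  of the image of \<open>q\<^sub>j\<close>, so Lagrange interpolation in \<open>y\<close> yields \<open>h\<close> with image \<open>H\<close> and
  exponents at most \<open>E\<close>. Then \<open>f\<close> and \<open>g h\<^sup>2\<close> have the same image and exponents below \<open>D\<close>,
  hence are equal.
\<close>

lemma map_poly_add_hom:
  assumes "\<And>a b. h (a + b) = h a + h b" "h 0 = 0"
  shows "map_poly h (p + q) = map_poly h p + map_poly h q"
  by (rule poly_eqI) (simp add: coeff_map_poly assms)

lemma map_poly_mult_hom:
  assumes "\<And>a b. h (a + b) = h a + h b" "\<And>a b. h (a * b) = h a * h b" "h 0 = 0"
  shows "map_poly h (p * q) = map_poly h p * map_poly h q"
proof (rule poly_eqI)
  fix n
  have "h (sum g A) = (\<Sum>x\<in>A. h (g x))" for g :: "nat \<Rightarrow> _" and A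
    using sum_comp_morphism[of h g A, OF assms(3,1)] by (simp add: comp_def)
  then show "coeff (map_poly h (p * q)) n = coeff (map_poly h p * map_poly h q) n"
    by (simp add: coeff_map_poly coeff_mult assms(2,3))
qed

section \<open>Divisibility of polynomials\<close>

lemma pseudo_bezout:
  fixes p q :: "'a::idom poly"
  shows "\<exists>a b d s r1 r2 u v. s \<noteq> 0 \<and> r1 \<noteq> 0 \<and> r2 \<noteq> 0 \<and>
    a * p + b * q = smult s d \<and> smult r1 p = d * u \<and> smult r2 q = d * v"
proof (induction "if q = 0 then 0 else Suc (degree q)" arbitrary: p q rule: less_induct)
  case (less q p)
  show ?case
  proof (cases "q = 0")
    case True
    then have "1 * p + 0 * q = smult 1 p \<and> smult 1 p = p * 1 \<and> smult 1 q = p * 0" by simp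
    then show ?thesis by (metis one_neq_zero)
  next
    case False
    obtain \<alpha> Q where \<alpha>: "\<alpha> \<noteq> 0" "smult \<alpha> p = q * Q + pseudo_mod p q"
      and deg: "pseudo_mod p q = 0 \<or> degree (pseudo_mod p q) < degree q"
      using pseudo_mod[OF False] by blast
    define r where "r = pseudo_mod p q"
    have "(if r = 0 then 0 else Suc (degree r)) < (if q = 0 then 0 else Suc (degree q))"
      using deg False by (auto simp: r_def)
    then obtain a b d s r1 r2 u v where IH: "s \<noteq> 0" "r1 \<noteq> 0" "r2 \<noteq> 0"
        "a * q + b * r = smult s d" "smult r1 q = d * u" "smult r2 r = d * v"
      using less.hyps by blast
    have "smult \<alpha> b * p + (a - b * Q) * q = smult s d"
    proof -
      have "smult \<alpha> b * p = b * smult \<alpha> p"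
        by (simp add: mult.commute)
      also have "\<dots> = b * q * Q + b * r"
        using \<alpha>(2) by (simp add: r_def algebra_simps)
      finally show ?thesis
        using IH(4) by (simp add: algebra_simps)
    qed
    moreover have "smult (\<alpha> * r1 * r2) p = d * (smult r2 (u * Q) + smult r1 v)"
    proof -
      have "smult (\<alpha> * r1 * r2) p = smult (r1 * r2) (smult \<alpha> p)"
        by (simp add: ac_simps)
      also have "\<dots> = smult r2 (smult r1 q) * Q + smult r1 (smult r2 r)"
        using \<alpha>(2) by (simp add: r_def algebra_simps smult_add_right)
      also have "\<dots> = d * (smult r2 (u * Q) + smult r1 v)"
        using IH(5,6) by (simp add: algebra_simps)
      finally show ?thesis .
    qed
    ultimately show ?thesis
      using IH(1-3,5) \<alpha>(1) by (metis mult_eq_0_iff)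
  qed
qed

lemma prime_elem_poly_const_combination:
  fixes p q :: "'a::idom poly"
  assumes p: "prime_elem p" "degree p > 0" and not_dvd: "\<not> p dvd q"
  shows "\<exists>a b r. r \<noteq> 0 \<and> a * p + b * q = [:r:]"
proof -
  obtain a b d s r1 r2 u v where s: "s \<noteq> 0" and r: "r1 \<noteq> 0" "r2 \<noteq> 0"
    and comb: "a * p + b * q = smult s d" and div: "smult r1 p = d * u" "smult r2 q = d * v"
    using pseudo_bezout[of p q] by blast
  have const_not_dvd: "\<not> p dvd [:c:]" if "c \<noteq> 0" for c
    using dvd_imp_degree_le[of p "[:c:]"] that p(2) by auto
  have "p \<noteq> 0" using p(2) by auto
  have "d * u = [:r1:] * p"
    using div(1) by simp
  then have "p dvd d * u" by (simp add: dvd_smult)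
  then consider "p dvd d" | "p dvd u"
    using p(1) prime_elem_dvd_multD by blast
  then show ?thesis
  proof cases
    case 1
    moreover have "d * v = [:r2:] * q"
      using div(2) by simp
    ultimately have "p dvd [:r2:] * q"
      by (metis dvd_mult2)
    then show ?thesis
      using p(1) prime_elem_dvd_multD const_not_dvd[OF r(2)] not_dvd by blast
  next
    case 2
    then obtain w where "u = p * w" by (elim dvdE)
    then have "[:r1:] * p = (d * w) * p"
      using div(1) by (simp add: ac_simps)
    then have dw: "d * w = [:r1:]"
      using \<open>p \<noteq> 0\<close> by (metis mult_cancel_right)
    then have "d \<noteq> 0" "w \<noteq> 0" using r(1) by auto
    then have "degree d = 0"
      using dw degree_mult_eq[of d w] by simp
    then obtain c where c: "d = [:c:]" by (metis degree_eq_zeroE)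
    then have "a * p + b * q = [:s * c:]" "s * c \<noteq> 0"
      using comb s \<open>d \<noteq> 0\<close> by auto
    then show ?thesis by blast
  qed
qed

lemma coprime_if_const_combination:
  fixes p q :: "'a::field poly"
  assumes "a * p + b * q = [:c:]" "c \<noteq> 0"
  shows "coprime p q"
proof (rule coprimeI)
  fix e assume "e dvd p" "e dvd q"
  then have "e dvd [:c:]"
    by (metis assms(1) dvd_add dvd_mult)
  moreover have "is_unit [:c:]"
    using assms(2) by (simp add: is_unit_const_poly_iff dvd_field_iff)
  ultimately show "is_unit e"
    by (rule dvd_unit_imp_unit)
qed

lemma prime_square_dvd_imp_dvd_pderiv:
  fixes \<pi> P :: "'a::idom poly"
  assumes "\<pi>^2 dvd P"
  shows "\<pi> dvd pderiv P"
proof -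
  obtain W where "P = \<pi>^2 * W"
    using assms by (elim dvdE)
  then have "P = \<pi> * (\<pi> * W)"
    by (simp add: power2_eq_square ac_simps)
  then show ?thesis
    by (simp add: pderiv_mult)
qed

lemma squarefree_times_coprime_not_square:
  fixes P R :: "'a::field_gcd poly"
  assumes "degree P > 0" "coprime P (pderiv P)" "coprime P R"
  shows "P * R \<noteq> Q^2"
proof
  assume square: "P * R = Q^2"
  have "P \<noteq> 0"
    using assms(1) by auto
  moreover have "\<not> is_unit P"
    using assms(1) \<open>P \<noteq> 0\<close> by (simp add: is_unit_iff_degree)
  ultimately obtain \<pi> where "\<pi> dvd P" and \<pi>: "prime \<pi>"
    using prime_divisor_exists by blast
  then have "\<not> \<pi> dvd R"
    using assms(3) coprime_common_divisor not_prime_unit by blast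
  then have "coprime (\<pi>^2) R"
    using \<pi> by (simp add: prime_elem_imp_coprime)
  have "\<pi> dvd Q^2"
    using \<open>\<pi> dvd P\<close> square by (metis dvd_mult2)
  then have "\<pi> dvd Q"
    using \<pi> prime_dvd_power by blast
  then have "\<pi>^2 dvd P * R"
    using square by (simp add: dvd_power_same)
  then have "\<pi>^2 dvd P"
    using \<open>coprime (\<pi>^2) R\<close> by (simp add: coprime_dvd_mult_left_iff)
  then have "\<pi> dvd pderiv P"
    by (rule prime_square_dvd_imp_dvd_pderiv)
  then show False
    using \<open>\<pi> dvd P\<close> \<pi> assms(2) coprime_common_divisor not_prime_unit by blast
qed

lemma mult_square_eq_square_imp_square:
  fixes a b c :: "'a::{semiring_gcd,idom}"
  assumes "a \<noteq> 0" "a^2 * b = c^2"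
  shows "\<exists>d. b = d^2"
proof -
  have "a dvd c"
    using assms(2) by (metis dvd_triv_left pow_divides_pow_iff zero_less_numeral)
  then obtain d where "c = a * d" by (elim dvdE)
  then have "b = d^2"
    using assms by (simp add: power_mult_distrib)
  then show ?thesis by blast
qed

lemma square_eq_smult_square_imp_smult:
  fixes A B :: "'a::field_gcd poly"
  assumes "A \<noteq> 0" "A^2 = smult l (B^2)"
  shows "\<exists>c. B = smult c A"
proof -
  have "B \<noteq> 0"
    using assms by auto
  have "B^2 dvd A^2"
    using assms(2) by (simp add: dvd_smult)
  then obtain C where C: "A = B * C"
    by (auto elim: dvdE)
  then have "B^2 * C^2 = B^2 * [:l:]"
    using assms(2) by (simp add: power_mult_distrib)
  then have "C^2 = [:l:]"
    using \<open>B \<noteq> 0\<close> by (metis mult_left_cancel power_not_zero)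
  then have "degree C = 0"
    using degree_power_eq[of C 2] by (cases "C = 0") auto
  then obtain c where "C = [:c:]" "c \<noteq> 0"
    using C assms(1) by (metis degree_eq_zeroE mult_zero_right pCons_0_0)
  then have "B = smult (1 / c) A"
    using C by simp
  then show ?thesis by blast
qed

lemma prime_factor_of_positive_degree:
  fixes G :: "'a::{factorial_ring_gcd,semiring_gcd_mult_normalize} poly"
  assumes "degree G > 0"
  shows "\<exists>p. prime_elem p \<and> degree p > 0 \<and> p dvd G"
proof -
  define P where "P = primitive_part G"
  have "G \<noteq> 0"
    using assms by auto
  have "degree P = degree G"
    by (simp add: P_def)
  then have "P \<noteq> 0" "\<not> is_unit P"
    using assms by (auto simp: is_unit_poly_iff)
  then obtain p where "p dvd P" "prime p"
    using prime_divisor_exists by blast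
  have "degree p > 0"
  proof (rule ccontr)
    assume "\<not> degree p > 0"
    then obtain c where c: "p = [:c:]"
      by (metis degree_eq_zeroE gr0I)
    then have "c dvd content P"
      using \<open>p dvd P\<close> by (simp add: const_poly_dvd_iff_dvd_content)
    then have "is_unit p"
      using \<open>G \<noteq> 0\<close> c by (simp add: P_def is_unit_const_poly_iff)
    with \<open>prime p\<close> show False
      by (simp add: not_prime_unit)
  qed
  moreover have "P dvd G"
    unfolding P_def by (metis content_times_primitive_part smult_dvd_cancel dvd_refl)
  ultimately show ?thesis
    using \<open>p dvd P\<close> \<open>prime p\<close> dvd_trans prime_imp_prime_elem by blast
qed

section \<open>Bivariate polynomials with square specializations\<close>

definition specialize :: "'a::comm_semiring_0 \<Rightarrow> 'a poly poly \<Rightarrow> 'a poly" where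
  "specialize y P = map_poly (\<lambda>c. poly c y) P"

lemma coeff_specialize [simp]: "coeff (specialize y P) n = poly (coeff P n) y"
  by (simp add: specialize_def coeff_map_poly)

lemma specialize_add [simp]: "specialize y (P + Q) = specialize y P + specialize y Q"
  by (rule poly_eqI) simp

lemma specialize_1 [simp]: "specialize y 1 = 1"
  by (simp add: specialize_def)

lemma specialize_mult [simp]:
  fixes P Q :: "'a::comm_semiring_1 poly poly"
  shows "specialize y (P * Q) = specialize y P * specialize y Q"
  unfolding specialize_def by (rule map_poly_mult_hom) simp_all

lemma specialize_power [simp]:
  fixes P :: "'a::comm_semiring_1 poly poly"
  shows "specialize y (P ^ k) = specialize y P ^ k"
  by (induction k) (simp_all add: specialize_def[symmetric])

lemma specialize_const [simp]: "specialize y [:c:] = [:poly c y:]"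
  by (rule poly_eqI) (simp add: coeff_pCons split: nat.splits)

lemma specialize_smult [simp]: "specialize y (smult c P) = smult (poly c y) (specialize y P)"
  by (rule poly_eqI) simp

lemma specialize_pderiv [simp]:
  fixes P :: "'a::idom poly poly"
  shows "specialize y (pderiv P) = pderiv (specialize y P)"
  by (rule poly_eqI) (simp add: coeff_pderiv of_nat_poly)

lemma degree_specialize:
  "poly (lead_coeff P) y \<noteq> 0 \<Longrightarrow> degree (specialize y P) = degree P"
  unfolding specialize_def by (rule map_poly_degree_eq) simp

definition cofinitely_square :: "'a::comm_semiring_1 poly poly \<Rightarrow> bool" where
  "cofinitely_square G \<longleftrightarrow> finite {y. \<nexists>Q. specialize y G = Q^2}"

lemma prime_square_dvd_if_cofinitely_square:
  fixes p G :: "'a::{field_char_0,field_gcd} poly poly"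
  assumes p: "prime_elem p" "degree p > 0" and "p dvd G" and "cofinitely_square G"
  shows "p^2 dvd G"
proof (rule ccontr)
  assume not_dvd: "\<not> p^2 dvd G"
  obtain R where G: "G = p * R"
    using \<open>p dvd G\<close> by (elim dvdE)
  have "\<not> p dvd R"
    using not_dvd unfolding G power2_eq_square by (metis mult_dvd_mono dvd_refl)
  then obtain a2 b2 r2 where r2: "r2 \<noteq> 0" "a2 * p + b2 * R = [:r2:]"
    using prime_elem_poly_const_combination[OF p] by blast
  have "\<not> p dvd pderiv p"
    using p(2) dvd_imp_degree_le[of p "pderiv p"] by (auto simp: pderiv_eq_0_iff degree_pderiv)
  then obtain a1 b1 r1 where r1: "r1 \<noteq> 0" "a1 * p + b1 * pderiv p = [:r1:]"
    using prime_elem_poly_const_combination[OF p] by blast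
  define z where "z = r1 * r2 * lead_coeff p"
  have "z \<noteq> 0"
    using r1(1) r2(1) p(2) by (auto simp: z_def)
  then have "finite ({y. \<nexists>Q. specialize y G = Q^2} \<union> {y. poly z y = 0})"
    using \<open>cofinitely_square G\<close> poly_roots_finite unfolding cofinitely_square_def by blast
  \<comment> \<open>Avoiding the zeros of \<open>z\<close> keeps the degree of \<open>p\<close> and both identities intact.\<close>
  then obtain y where "y \<notin> {y. \<nexists>Q. specialize y G = Q^2} \<union> {y. poly z y = 0}"
    using ex_new_if_finite[OF infinite_UNIV_char_0] by blast
  then obtain Q where Q: "specialize y G = Q^2"
    and nonzero: "poly r1 y \<noteq> 0" "poly r2 y \<noteq> 0" "poly (lead_coeff p) y \<noteq> 0"
    by (auto simp: z_def)
  have "degree (specialize y p) > 0"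
    using degree_specialize[OF nonzero(3)] p(2) by simp
  moreover have "coprime (specialize y p) (pderiv (specialize y p))"
    using arg_cong[OF r1(2), of "specialize y"] nonzero(1)
    by (intro coprime_if_const_combination) simp_all
  moreover have "coprime (specialize y p) (specialize y R)"
    using arg_cong[OF r2(2), of "specialize y"] nonzero(2)
    by (intro coprime_if_const_combination) simp_all
  ultimately have "specialize y p * specialize y R \<noteq> Q^2"
    by (rule squarefree_times_coprime_not_square)
  with Q show False
    by (simp add: G)
qed

lemma cofinitely_square_cancel_square:
  fixes p G :: "'a::field_gcd poly poly"
  assumes "cofinitely_square (p^2 * G)" "p \<noteq> 0"
  shows "cofinitely_square G"
proof -
  have "{y. \<nexists>Q. specialize y G = Q^2} \<subseteq>
      {y. \<nexists>Q. specialize y (p^2 * G) = Q^2} \<union> {y. poly (lead_coeff p) y = 0}"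
  proof clarify
    fix y Q
    assume "\<nexists>Q. specialize y G = Q^2" "specialize y (p^2 * G) = Q^2"
      "poly (lead_coeff p) y \<noteq> 0"
    then have "coeff (specialize y p) (degree p) \<noteq> 0"
      by simp
    then have "specialize y p \<noteq> 0"
      by (metis coeff_0)
    then show False
      using mult_square_eq_square_imp_square \<open>specialize y (p^2 * G) = Q^2\<close> \<open>\<nexists>Q. specialize y G = Q^2\<close>
      by (metis specialize_mult specialize_power)
  qed
  moreover have "finite {y. poly (lead_coeff p) y = 0}"
    using assms(2) by (intro poly_roots_finite) simp
  ultimately show ?thesis
    using assms(1) unfolding cofinitely_square_def by (meson finite_Un finite_subset)
qed

theorem cofinitely_square_imp_smult_square:
  fixes G :: "'a::{field_char_0,field_gcd} poly poly"
  assumes "cofinitely_square G"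
  shows "\<exists>g H. G = smult g (H^2)"
  using assms
proof (induction "degree G" arbitrary: G rule: less_induct)
  case less
  show ?case
  proof (cases "degree G = 0")
    case True
    then have "G = smult (coeff G 0) (1^2)"
      by (metis degree_eq_zeroE coeff_pCons_0 smult_one one_power2 mult.right_neutral)
    then show ?thesis by blast
  next
    case False
    then obtain p where p: "prime_elem p" "degree p > 0" "p dvd G"
      using prime_factor_of_positive_degree by blast
    then have "p^2 dvd G"
      using less.prems by (intro prime_square_dvd_if_cofinitely_square)
    then obtain G' where G: "G = p^2 * G'" by (elim dvdE)
    have "p \<noteq> 0" "G' \<noteq> 0"
      using p(2) False G by auto
    then have "degree G' < degree G"
      using p(2) G by (simp add: degree_mult_eq degree_power_eq)
    moreover have "cofinitely_square G'"
      using less.prems \<open>p \<noteq> 0\<close> unfolding G by (rule cofinitely_square_cancel_square)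
    ultimately obtain g H where "G' = smult g (H^2)"
      using less.hyps by blast
    then have "G = smult g ((p * H)^2)"
      using G by (simp add: power_mult_distrib)
    then show ?thesis by blast
  qed
qed

lemma coeff_poly_const_poly: "coeff (poly P [:c:]) e = poly (map_poly (\<lambda>x. coeff x e) P) c"
  by (induction P) (simp_all add: map_poly_pCons)

lemma degree_poly_const_poly_le:
  "(\<And>k. degree (coeff P k) \<le> d) \<Longrightarrow> degree (poly P [:c:]) \<le> d"
proof (induction P)
  case (pCons a P)
  then have "degree a \<le> d" "degree (poly P [:c:]) \<le> d"
    by (metis coeff_pCons_0, metis coeff_pCons_Suc)
  then have "degree (smult c (poly P [:c:])) \<le> d"
    using degree_smult_le le_trans by blast
  with \<open>degree a \<le> d\<close> show ?case
    by (simp add: degree_add_le)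
qed simp

lemma degree_coeff_le_degree_poly_const_poly:
  fixes H :: "'a::{idom,ring_char_0} poly poly"
  shows "\<exists>c. degree (coeff H k) \<le> degree (poly H [:c:])"
proof (cases "coeff H k = 0")
  case False
  define e where "e = degree (coeff H k)"
  have "coeff (map_poly (\<lambda>x. coeff x e) H) k \<noteq> 0"
    using False by (simp add: e_def coeff_map_poly)
  then have "map_poly (\<lambda>x. coeff x e) H \<noteq> 0"
    by auto
  then obtain c where "poly (map_poly (\<lambda>x. coeff x e) H) c \<noteq> 0"
    using poly_all_0_iff_0 by blast
  then have "coeff (poly H [:c:]) e \<noteq> 0"
    by (simp add: coeff_poly_const_poly)
  then have "e \<le> degree (poly H [:c:])"
    by (rule le_degree)
  then show ?thesis
    unfolding e_def by blast
qed simp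

lemma degree_coeff_le_if_smult_square:
  fixes G H :: "'a::{idom,ring_char_0} poly poly"
  assumes "G = smult g (H^2)" "g \<noteq> 0" "\<And>k. degree (coeff G k) \<le> d"
  shows "degree (coeff H k) \<le> d"
proof -
  obtain c where c: "degree (coeff H k) \<le> degree (poly H [:c:])"
    using degree_coeff_le_degree_poly_const_poly by blast
  have "degree (poly H [:c:]) \<le> degree (g * poly H [:c:]^2)"
    using assms(2) by (cases "poly H [:c:] = 0") (simp_all add: degree_mult_eq degree_power_eq)
  also have "g * poly H [:c:]^2 = poly G [:c:]"
    by (simp add: assms(1))
  also have "degree \<dots> \<le> d"
    using assms(3) by (rule degree_poly_const_poly_le)
  finally show ?thesis
    using c by linarith
qed

section \<open>Lagrange interpolation\<close>

definition lagrange_basis :: "(nat \<Rightarrow> 'a::field) \<Rightarrow> nat \<Rightarrow> nat \<Rightarrow> 'a poly" where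
  "lagrange_basis xs d j = (\<Prod>i\<in>{..d} - {j}. smult (1 / (xs j - xs i)) [:- xs i, 1:])"

lemma poly_lagrange_basis_eq_prod:
  "poly (lagrange_basis xs d j) x = (\<Prod>i\<in>{..d} - {j}. (x - xs i) / (xs j - xs i))"
  unfolding lagrange_basis_def poly_prod by (intro prod.cong) (simp_all add: diff_divide_distrib)

lemma poly_lagrange_basis:
  assumes "inj_on xs {..d}" "j \<le> d" "k \<le> d"
  shows "poly (lagrange_basis xs d j) (xs k) = (if k = j then 1 else 0)"
proof (cases "k = j")
  case True
  have "(xs k - xs i) / (xs j - xs i) = 1" if "i \<in> {..d} - {j}" for i
    using assms(1,2) that True by (auto dest: inj_onD)
  then show ?thesis
    using True by (simp add: poly_lagrange_basis_eq_prod)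
next
  case False
  then have "\<exists>i\<in>{..d} - {j}. (xs k - xs i) / (xs j - xs i) = 0"
    using assms(3) by auto
  then show ?thesis
    using False by (simp add: poly_lagrange_basis_eq_prod)
qed

lemma degree_lagrange_basis_le:
  assumes "j \<le> d"
  shows "degree (lagrange_basis xs d j) \<le> d"
proof -
  have "degree (lagrange_basis xs d j) \<le> sum (degree \<circ> (\<lambda>i. smult (1 / (xs j - xs i)) [:- xs i, 1:])) ({..d} - {j})"
    unfolding lagrange_basis_def by (rule degree_prod_sum_le) simp
  also have "\<dots> \<le> (\<Sum>i\<in>{..d} - {j}. 1)"
    by (rule sum_mono) (simp add: degree_smult_le[THEN order_trans])
  also have "\<dots> = d"
    using assms by simp
  finally show ?thesis .
qed

lemma lagrange_interpolation:
  fixes p :: "'a::field poly"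
  assumes "inj_on xs {..d}" "degree p \<le> d"
  shows "p = (\<Sum>j\<le>d. smult (poly p (xs j)) (lagrange_basis xs d j))" (is "p = ?q")
proof (rule poly_eqI_degree[where A = "xs ` {..d}"])
  fix x assume "x \<in> xs ` {..d}"
  then obtain k where "k \<le> d" "x = xs k"
    by blast
  then have "poly ?q x = (\<Sum>j\<le>d. poly p (xs j) * (if k = j then 1 else 0))"
    using assms(1) by (simp add: poly_sum poly_lagrange_basis)
  also have "\<dots> = (\<Sum>j\<le>d. if k = j then poly p (xs j) else 0)"
    by (rule sum.cong) auto
  also have "\<dots> = poly p x"
    using \<open>k \<le> d\<close> \<open>x = xs k\<close> by simp
  finally show "poly p x = poly ?q x" ..
next
  have "card (xs ` {..d}) = Suc d"
    using assms(1) by (simp add: card_image)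
  moreover have "degree ?q \<le> d"
    by (intro degree_sum_le) (auto intro: degree_smult_le[THEN order_trans] degree_lagrange_basis_le)
  ultimately show "degree p < card (xs ` {..d})" "degree ?q < card (xs ` {..d})"
    using assms(2) by simp_all
qed

section \<open>Kronecker substitution\<close>

lemma digit_expansion_unique:
  fixes x y :: "nat \<Rightarrow> nat"
  assumes "\<forall>i<n. x i < D" "\<forall>i<n. y i < D" "(\<Sum>i<n. x i * D^i) = (\<Sum>i<n. y i * D^i)" "i < n"
  shows "x i = y i"
  using assms
proof (induction n arbitrary: x y i)
  case 0
  then show ?case by simp
next
  case (Suc n)
  note IH = Suc.IH and prems = Suc.prems
  let ?tail = "\<lambda>z. \<Sum>i<n. z (Suc i) * D^i"
  have expand: "(\<Sum>i<Suc n. z i * D^i) = z 0 + D * ?tail z" for z :: "nat \<Rightarrow> nat"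
    by (subst sum.lessThan_Suc_shift) (simp add: sum_distrib_left algebra_simps)
  have digits: "(a + D * s) mod D = a" "(a + D * s) div D = s" if "a < D" for a s :: nat
    using that by simp_all
  have "x 0 < D" "y 0 < D"
    using prems(1,2) by auto
  moreover have "x 0 + D * ?tail x = y 0 + D * ?tail y"
    using prems(3) unfolding expand .
  ultimately have "x 0 = y 0" "?tail x = ?tail y"
    using digits by metis+
  show ?case
  proof (cases i)
    case 0
    with \<open>x 0 = y 0\<close> show ?thesis by simp
  next
    case (Suc j)
    then show ?thesis
      using IH[of "\<lambda>i. x (Suc i)" "\<lambda>i. y (Suc i)" j] prems \<open>?tail x = ?tail y\<close> by simp
  qed
qed

definition kron_exp :: "nat \<Rightarrow> nat \<Rightarrow> (nat \<Rightarrow>\<^sub>0 nat) \<Rightarrow> nat" where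
  "kron_exp n D m = (\<Sum>i<n. Poly_Mapping.lookup m i * D^i)"

lemma kron_exp_add: "kron_exp n D (a + b) = kron_exp n D a + kron_exp n D b"
  unfolding kron_exp_def by (simp add: lookup_add algebra_simps sum.distrib)

definition kron :: "nat \<Rightarrow> nat \<Rightarrow> ((nat \<Rightarrow>\<^sub>0 nat) \<Rightarrow>\<^sub>0 'a::comm_semiring_1) \<Rightarrow> 'a poly" where
  "kron n D p = (\<Sum>m\<in>Poly_Mapping.keys p. monom (Poly_Mapping.lookup p m) (kron_exp n D m))"

lemma kron_superset:
  assumes "finite A" "Poly_Mapping.keys p \<subseteq> A"
  shows "kron n D p = (\<Sum>m\<in>A. monom (Poly_Mapping.lookup p m) (kron_exp n D m))"
  unfolding kron_def by (rule sum.mono_neutral_left) (use assms in \<open>auto simp: in_keys_iff\<close>)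

lemma kron_0 [simp]: "kron n D 0 = 0"
  by (simp add: kron_def)

lemma kron_add: "kron n D (p + q) = kron n D p + kron n D q"
proof -
  let ?A = "Poly_Mapping.keys p \<union> Poly_Mapping.keys q"
  have "kron n D (p + q) = (\<Sum>m\<in>?A. monom (Poly_Mapping.lookup (p + q) m) (kron_exp n D m))"
    by (rule kron_superset) (simp_all add: keys_add)
  also have "\<dots> = kron n D p + kron n D q"
    by (simp add: kron_superset[of ?A] lookup_add add_monom[symmetric] sum.distrib)
  finally show ?thesis .
qed

lemma kron_sum: "kron n D (sum f A) = (\<Sum>x\<in>A. kron n D (f x))"
  using sum_comp_morphism[of "kron n D" f A] by (simp add: kron_add comp_def)

lemma kron_single: "kron n D (Poly_Mapping.single m c) = monom c (kron_exp n D m)"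
  by (cases "c = 0") (simp_all add: kron_def)

lemma kron_mult: "kron n D (p * q) = kron n D p * kron n D q"
proof -
  have expand: "r = (\<Sum>m\<in>Poly_Mapping.keys r. Poly_Mapping.single m (Poly_Mapping.lookup r m))" for r :: "(nat \<Rightarrow>\<^sub>0 nat) \<Rightarrow>\<^sub>0 'a"
    by (rule poly_mapping_eqI) (simp add: lookup_sum lookup_single when_def in_keys_iff)
  have "p * q = (\<Sum>a\<in>Poly_Mapping.keys p. \<Sum>b\<in>Poly_Mapping.keys q. Poly_Mapping.single a (Poly_Mapping.lookup p a) * Poly_Mapping.single b (Poly_Mapping.lookup q b))"
    by (subst expand[of p], subst expand[of q]) (rule sum_product)
  then have "kron n D (p * q) = (\<Sum>a\<in>Poly_Mapping.keys p. \<Sum>b\<in>Poly_Mapping.keys q.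
      monom (Poly_Mapping.lookup p a) (kron_exp n D a) * monom (Poly_Mapping.lookup q b) (kron_exp n D b))"
    by (simp add: kron_sum mult_single kron_single kron_exp_add mult_monom)
  also have "\<dots> = kron n D p * kron n D q"
    unfolding kron_def by (rule sum_product[symmetric])
  finally show ?thesis .
qed

lemma kron_1 [simp]: "kron n D 1 = 1"
  using kron_single[of n D 0 1] by (simp add: kron_exp_def)

lemma kron_power: "kron n D (p ^ k) = kron n D p ^ k"
  by (induction k) (simp_all add: kron_mult)

lemma kron_const_mp [simp]: "kron n D (const_mp c) = [:c:]"
  by (simp add: const_mp_def kron_single kron_exp_def monom_0)

lemma lookup_const_mp_mult:
  "Poly_Mapping.lookup (const_mp c * p) m = c * Poly_Mapping.lookup p m"
  unfolding const_mp_def mult_map_scale_conv_mult[symmetric]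
  by (simp add: Poly_Mapping.map.rep_eq when_def)

definition bounded_exps :: "nat \<Rightarrow> nat \<Rightarrow> ((nat \<Rightarrow>\<^sub>0 nat) \<Rightarrow>\<^sub>0 'a::zero) \<Rightarrow> bool" where
  "bounded_exps n E p \<longleftrightarrow>
    (\<forall>m\<in>Poly_Mapping.keys p. Poly_Mapping.keys m \<subseteq> {..<n} \<and> (\<forall>i. Poly_Mapping.lookup m i \<le> E))"

lemma kron_exp_inj:
  assumes "E < D"
    and "Poly_Mapping.keys a \<subseteq> {..<n}" "\<forall>i. Poly_Mapping.lookup a i \<le> E"
    and "Poly_Mapping.keys b \<subseteq> {..<n}" "\<forall>i. Poly_Mapping.lookup b i \<le> E"
    and "kron_exp n D a = kron_exp n D b"
  shows "a = b"
proof (rule poly_mapping_eqI)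
  fix i
  show "Poly_Mapping.lookup a i = Poly_Mapping.lookup b i"
  proof (cases "i < n")
    case True
    show ?thesis
      by (rule digit_expansion_unique[of n _ D]) (use assms True in \<open>auto simp: kron_exp_def intro: le_less_trans\<close>)
  next
    case False
    then have "i \<notin> Poly_Mapping.keys a" "i \<notin> Poly_Mapping.keys b"
      using assms(2,4) by auto
    then show ?thesis by (simp add: in_keys_iff)
  qed
qed

lemma kron_eq_0_imp_eq_0:
  assumes "bounded_exps n E p" "E < D" "kron n D p = 0"
  shows "p = 0"
proof (rule ccontr)
  assume "p \<noteq> 0"
  then obtain m0 where m0: "m0 \<in> Poly_Mapping.keys p"
    by fastforce
  have "coeff (kron n D p) (kron_exp n D m0) =
      (\<Sum>m\<in>Poly_Mapping.keys p. if m0 = m then Poly_Mapping.lookup p m else 0)"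
    unfolding kron_def coeff_sum coeff_monom
    using kron_exp_inj[OF assms(2), of m0 n] assms(1) m0
    by (intro sum.cong) (auto simp: bounded_exps_def)
  also have "\<dots> = Poly_Mapping.lookup p m0"
    using m0 by simp
  finally show False
    using assms(3) m0 by (simp add: in_keys_iff)
qed

lemma bounded_exps_0 [simp]: "bounded_exps n E 0"
  by (simp add: bounded_exps_def)

lemma bounded_exps_mono: "bounded_exps n E p \<Longrightarrow> E \<le> E' \<Longrightarrow> bounded_exps n E' p"
  unfolding bounded_exps_def by (meson order_trans)

lemma bounded_exps_add:
  "bounded_exps n E p \<Longrightarrow> bounded_exps n E q \<Longrightarrow> bounded_exps n E (p + q)"
  using keys_add[of p q] unfolding bounded_exps_def by blast

lemma bounded_exps_diff:
  fixes p q :: "(nat \<Rightarrow>\<^sub>0 nat) \<Rightarrow>\<^sub>0 'a::ab_group_add"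
  shows "bounded_exps n E p \<Longrightarrow> bounded_exps n E q \<Longrightarrow> bounded_exps n E (p - q)"
  using keys_diff[of p q] unfolding bounded_exps_def by blast

lemma bounded_exps_sum:
  "(\<And>x. x \<in> A \<Longrightarrow> bounded_exps n E (f x)) \<Longrightarrow> bounded_exps n E (sum f A)"
  by (induction A rule: infinite_finite_induct) (simp_all add: bounded_exps_add)

lemma bounded_exps_mult:
  assumes p: "bounded_exps n E1 p" and q: "bounded_exps n E2 q"
  shows "bounded_exps n (E1 + E2) (p * q)"
  unfolding bounded_exps_def
proof
  fix m assume "m \<in> Poly_Mapping.keys (p * q)"
  then obtain a b where ab: "m = a + b" "a \<in> Poly_Mapping.keys p" "b \<in> Poly_Mapping.keys q"
    using keys_mult by blast
  have "Poly_Mapping.keys m \<subseteq> {..<n}"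
    using ab p q keys_add[of a b] unfolding bounded_exps_def by blast
  moreover have "\<forall>i. Poly_Mapping.lookup m i \<le> E1 + E2"
    using ab p q unfolding bounded_exps_def by (auto simp: lookup_add intro: add_mono)
  ultimately show "Poly_Mapping.keys m \<subseteq> {..<n} \<and> (\<forall>i. Poly_Mapping.lookup m i \<le> E1 + E2)"
    by blast
qed

lemma bounded_exps_const_mp: "bounded_exps n 0 (const_mp c)"
  by (simp add: bounded_exps_def const_mp_def)

lemma bounded_exps_imp_in_vars: "bounded_exps n E p \<Longrightarrow> in_vars n p"
  unfolding bounded_exps_def in_vars_def by blast

lemma in_vars_imp_bounded_exps:
  assumes "in_vars n p"
  shows "bounded_exps n (\<Sum>m\<in>Poly_Mapping.keys p. \<Sum>i<n. Poly_Mapping.lookup m i) p"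
  unfolding bounded_exps_def
proof (intro ballI conjI allI)
  fix m i assume m: "m \<in> Poly_Mapping.keys p"
  then show keys: "Poly_Mapping.keys m \<subseteq> {..<n}"
    using assms by (simp add: in_vars_def)
  have "Poly_Mapping.lookup m i \<le> (\<Sum>i<n. Poly_Mapping.lookup m i)"
  proof (cases "i < n")
    case True
    then show ?thesis by (intro member_le_sum) auto
  next
    case False
    then have "i \<notin> Poly_Mapping.keys m"
      using keys by auto
    then show ?thesis by (simp add: in_keys_iff)
  qed
  also have "\<dots> \<le> (\<Sum>m\<in>Poly_Mapping.keys p. \<Sum>i<n. Poly_Mapping.lookup m i)"
    using m by (intro member_le_sum) auto
  finally show "Poly_Mapping.lookup m i \<le> \<dots>" .
qed

lemma in_vars_imp_uniformly_bounded_exps: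
  assumes "finite A" "\<forall>p\<in>A. in_vars n p"
  shows "\<exists>E. \<forall>p\<in>A. bounded_exps n E p"
  using assms
proof (induction A rule: finite_induct)
  case empty
  then show ?case by simp
next
  case (insert p A)
  then obtain E where "\<forall>q\<in>A. bounded_exps n E q"
    by blast
  moreover obtain Ep where "bounded_exps n Ep p"
    using insert.prems in_vars_imp_bounded_exps by blast
  ultimately have "\<forall>q\<in>insert p A. bounded_exps n (max E Ep) q"
    by (auto intro: bounded_exps_mono)
  then show ?case by blast
qed

definition bounded_exps_poly :: "nat \<Rightarrow> nat \<Rightarrow> ((nat \<Rightarrow>\<^sub>0 nat) \<Rightarrow>\<^sub>0 'a::zero) poly \<Rightarrow> bool" where
  "bounded_exps_poly n E f \<longleftrightarrow> (\<forall>i. bounded_exps n E (coeff f i))"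

lemma bounded_exps_poly_mono:
  "bounded_exps_poly n E f \<Longrightarrow> E \<le> E' \<Longrightarrow> bounded_exps_poly n E' f"
  unfolding bounded_exps_poly_def by (meson bounded_exps_mono)

lemma bounded_exps_poly_diff:
  fixes f g :: "((nat \<Rightarrow>\<^sub>0 nat) \<Rightarrow>\<^sub>0 'a::ab_group_add) poly"
  shows "bounded_exps_poly n E f \<Longrightarrow> bounded_exps_poly n E g \<Longrightarrow> bounded_exps_poly n E (f - g)"
  by (simp add: bounded_exps_poly_def bounded_exps_diff)

lemma bounded_exps_poly_sum:
  "(\<And>x. x \<in> A \<Longrightarrow> bounded_exps_poly n E (f x)) \<Longrightarrow> bounded_exps_poly n E (sum f A)"
  by (simp add: bounded_exps_poly_def coeff_sum bounded_exps_sum)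

lemma bounded_exps_poly_mult:
  "bounded_exps_poly n E1 f \<Longrightarrow> bounded_exps_poly n E2 g \<Longrightarrow> bounded_exps_poly n (E1 + E2) (f * g)"
  unfolding bounded_exps_poly_def coeff_mult by (auto intro!: bounded_exps_sum bounded_exps_mult)

lemma bounded_exps_poly_const: "bounded_exps n E p \<Longrightarrow> bounded_exps_poly n E [:p:]"
  by (simp add: bounded_exps_poly_def coeff_pCons split: nat.splits)

lemma bounded_exps_poly_map_const_mp: "bounded_exps_poly n 0 (map_poly const_mp g)"
proof -
  have "const_mp 0 = 0"
    by (simp add: const_mp_def)
  then show ?thesis
    by (simp add: bounded_exps_poly_def coeff_map_poly bounded_exps_const_mp)
qed

definition kron_lift :: "nat \<Rightarrow> nat \<Rightarrow> ((nat \<Rightarrow>\<^sub>0 nat) \<Rightarrow>\<^sub>0 'a::comm_semiring_1) \<Rightarrow> 'a poly poly" where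
  "kron_lift n D a = map_poly (\<lambda>r. [:r:]) (kron n D a)"

text \<open>\<open>kron_poly n D f\<close> applies the substitution to the coefficients of \<open>f(x, y)\<close>; its outer
  variable is the Kronecker variable \<open>t\<close> and its coefficients are polynomials in \<open>y\<close>.\<close>

definition kron_poly :: "nat \<Rightarrow> nat \<Rightarrow> ((nat \<Rightarrow>\<^sub>0 nat) \<Rightarrow>\<^sub>0 'a::comm_semiring_1) poly \<Rightarrow> 'a poly poly" where
  "kron_poly n D f = poly (map_poly (kron_lift n D) f) [:[:0, 1:]:]"

lemma kron_lift_0 [simp]: "kron_lift n D 0 = 0"
  by (simp add: kron_lift_def)

lemma kron_lift_add: "kron_lift n D (a + b) = kron_lift n D a + kron_lift n D b"
  unfolding kron_lift_def kron_add by (rule map_poly_add_hom) simp_all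

lemma kron_lift_mult: "kron_lift n D (a * b) = kron_lift n D a * kron_lift n D b"
  unfolding kron_lift_def kron_mult by (rule map_poly_mult_hom) (simp_all add: mult.commute)

lemma kron_poly_0 [simp]: "kron_poly n D 0 = 0"
  by (simp add: kron_poly_def)

lemma kron_poly_add: "kron_poly n D (f + g) = kron_poly n D f + kron_poly n D g"
  unfolding kron_poly_def by (subst map_poly_add_hom) (simp_all add: kron_lift_add)

lemma kron_poly_mult: "kron_poly n D (f * g) = kron_poly n D f * kron_poly n D g"
  unfolding kron_poly_def by (subst map_poly_mult_hom) (simp_all add: kron_lift_add kron_lift_mult)

lemma kron_poly_sum: "kron_poly n D (sum f A) = (\<Sum>x\<in>A. kron_poly n D (f x))"
  using sum_comp_morphism[of "kron_poly n D" f A] by (simp add: kron_poly_add comp_def)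

lemma kron_poly_pCons: "kron_poly n D (pCons a f) = kron_lift n D a + [:[:0, 1:]:] * kron_poly n D f"
  by (simp add: kron_poly_def map_poly_pCons)

lemma kron_poly_const: "kron_poly n D [:a:] = kron_lift n D a"
  using kron_poly_pCons[of n D a 0] by (simp add: kron_poly_def)

lemma coeff_coeff_kron_poly: "coeff (coeff (kron_poly n D f) k) i = coeff (kron n D (coeff f i)) k"
proof (induction f arbitrary: i)
  case (pCons a f)
  then show ?case
    by (cases i) (simp_all add: kron_poly_pCons kron_lift_def coeff_map_poly coeff_pCons)
qed (simp add: kron_poly_def)

lemma degree_coeff_kron_poly: "degree (coeff (kron_poly n D f) k) \<le> degree f"
  by (rule degree_le) (simp add: coeff_coeff_kron_poly coeff_eq_0)

lemma specialize_kron_poly: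
  "specialize y (kron_poly n D f) = kron n D (poly f (const_mp y))"
proof (induction f)
  case (pCons a f)
  have "specialize y (kron_lift n D a) = kron n D a"
    by (rule poly_eqI) (simp add: kron_lift_def coeff_map_poly)
  with pCons show ?case
    by (simp add: kron_poly_pCons kron_add kron_mult)
qed (simp add: kron_poly_def specialize_def)

lemma kron_poly_map_const_mp: "kron_poly n D (map_poly const_mp g) = [:g:]"
proof (induction g)
  case (pCons a g)
  have "kron_lift n D (const_mp a) = [:[:a:]:]"
    by (simp add: kron_lift_def map_poly_pCons)
  with pCons show ?case
    by (simp add: map_poly_pCons kron_poly_pCons const_mp_def)
qed (simp add: kron_poly_def)

lemma kron_poly_inj:
  fixes f g :: "((nat \<Rightarrow>\<^sub>0 nat) \<Rightarrow>\<^sub>0 'a::comm_ring_1) poly"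
  assumes "bounded_exps_poly n E f" "bounded_exps_poly n E g" "E < D"
    and "kron_poly n D f = kron_poly n D g"
  shows "f = g"
proof (rule poly_eqI)
  fix i
  have "kron n D (coeff (f - g) i) = 0"
  proof (rule poly_eqI)
    fix k
    have "coeff (kron n D (coeff (f - g) i)) k = coeff (coeff (kron_poly n D (f - g)) k) i"
      by (simp add: coeff_coeff_kron_poly)
    also have "kron_poly n D (f - g) = 0"
      using assms(4) kron_poly_add[of n D "f - g" g] by simp
    finally show "coeff (kron n D (coeff (f - g) i)) k = coeff 0 k"
      by simp
  qed
  then have "coeff (f - g) i = 0"
    using bounded_exps_poly_diff[OF assms(1,2)] assms(3)
    by (intro kron_eq_0_imp_eq_0) (auto simp: bounded_exps_poly_def)
  then show "coeff f i = coeff g i"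
    by simp
qed

lemma cofinitely_square_kron_poly:
  assumes "\<forall>y. \<exists>p. poly f (const_mp y) = p^2"
  shows "cofinitely_square (kron_poly n D f)"
proof -
  have "\<exists>Q. specialize y (kron_poly n D f) = Q^2" for y
  proof -
    obtain p where "poly f (const_mp y) = p^2"
      using assms by blast
    then show ?thesis
      by (auto simp: specialize_kron_poly kron_power)
  qed
  then show ?thesis
    by (simp add: cofinitely_square_def)
qed

section \<open>Pulling the factorization back\<close>

lemma kron_poly_interpolation:
  fixes H :: "real poly poly"
  assumes ys: "inj_on ys {..d}" and deg: "\<And>k. degree (coeff H k) \<le> d"
    and specialized: "\<And>j. j \<le> d \<Longrightarrow> specialize (ys j) H = smult (c j) (kron n D (q j))"
    and bounded: "\<And>j. j \<le> d \<Longrightarrow> bounded_exps n E (q j)"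
  shows "\<exists>h. bounded_exps_poly n E h \<and> kron_poly n D h = H"
proof -
  define h where "h = (\<Sum>j\<le>d. map_poly const_mp (smult (c j) (lagrange_basis ys d j)) * [:q j:])"
  have "bounded_exps_poly n (0 + E) (map_poly const_mp (smult (c j) (lagrange_basis ys d j)) * [:q j:])"
    if "j \<le> d" for j
    using bounded[OF that] by (intro bounded_exps_poly_mult bounded_exps_poly_map_const_mp bounded_exps_poly_const)
  then have "bounded_exps_poly n E h"
    unfolding h_def by (intro bounded_exps_poly_sum) simp
  moreover have "kron_poly n D h = H"
  proof (rule poly_eqI)
    fix k
    have summand: "coeff (kron_poly n D (map_poly const_mp a * [:p:])) k = smult (coeff (kron n D p) k) a"
      for a p
      by (simp only: kron_poly_mult kron_poly_map_const_mp kron_poly_const)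
        (simp add: kron_lift_def coeff_map_poly)
    have "poly (coeff H k) (ys j) = c j * coeff (kron n D (q j)) k" if "j \<le> d" for j
      using arg_cong[OF specialized[OF that], of "\<lambda>P. coeff P k"] by simp
    then have "coeff (kron_poly n D h) k = (\<Sum>j\<le>d. smult (poly (coeff H k) (ys j)) (lagrange_basis ys d j))"
      unfolding h_def kron_poly_sum coeff_sum summand by (intro sum.cong) (simp_all add: mult.commute)
    also have "\<dots> = coeff H k"
      using lagrange_interpolation[OF ys deg] by simp
    finally show "coeff (kron_poly n D h) k = coeff H k" .
  qed
  ultimately show ?thesis by blast
qed

lemma square_factor_in_kron_poly_image:
  fixes f :: "rmpoly poly"
  assumes factor: "kron_poly n D f = smult g (H^2)"
    and ys: "inj_on ys {..degree f}"
    and roots: "\<And>j. j \<le> degree f \<Longrightarrow> poly f (const_mp (ys j)) = q j ^ 2"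
    and nonzero: "\<And>j. j \<le> degree f \<Longrightarrow> kron n D (q j) \<noteq> 0"
    and bounded: "\<And>j. j \<le> degree f \<Longrightarrow> bounded_exps n E (q j)"
  shows "\<exists>h. bounded_exps_poly n E h \<and> kron_poly n D h = H"
proof -
  have specialized: "kron n D (q j) ^ 2 = smult (poly g (ys j)) (specialize (ys j) H ^ 2)"
    if "j \<le> degree f" for j
    using arg_cong[OF factor, of "specialize (ys j)"] roots[OF that]
    by (simp add: specialize_kron_poly kron_power)
  then have "g \<noteq> 0"
    using nonzero[of 0] by auto
  then have "degree (coeff H k) \<le> degree f" for k
    using factor degree_coeff_kron_poly by (metis degree_coeff_le_if_smult_square)
  moreover have "\<exists>c. specialize (ys j) H = smult c (kron n D (q j))" if "j \<le> degree f" for j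
    using nonzero[OF that] specialized[OF that] by (rule square_eq_smult_square_imp_smult)
  then obtain c where "\<And>j. j \<le> degree f \<Longrightarrow> specialize (ys j) H = smult (c j) (kron n D (q j))"
    by metis
  ultimately show ?thesis
    using kron_poly_interpolation[OF ys] bounded by blast
qed

lemma infinite_nonzero_eval_const_mp:
  fixes f :: "rmpoly poly"
  assumes "f \<noteq> 0"
  shows "infinite {y. poly f (const_mp y) \<noteq> 0}"
proof -
  obtain m where m: "m \<in> Poly_Mapping.keys (lead_coeff f)"
    using assms by fastforce
  define \<phi> where "\<phi> = map_poly (\<lambda>a. Poly_Mapping.lookup a m) f"
  have lookup_eval: "Poly_Mapping.lookup (poly f (const_mp y)) m = poly \<phi> y" for y
    unfolding \<phi>_def by (induction f) (simp_all add: map_poly_pCons lookup_add lookup_const_mp_mult)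
  have "coeff \<phi> (degree f) \<noteq> 0"
    using m by (simp add: \<phi>_def coeff_map_poly in_keys_iff)
  then have "finite {y. poly \<phi> y = 0}"
    by (intro poly_roots_finite) auto
  moreover have "{y. poly f (const_mp y) = 0} \<subseteq> {y. poly \<phi> y = 0}"
    using lookup_eval by (metis (mono_tags) lookup_zero mem_Collect_eq subsetI)
  ultimately have "infinite (UNIV - {y. poly f (const_mp y) = 0})"
    using infinite_UNIV_char_0 by (meson Diff_infinite_finite finite_subset)
  moreover have "UNIV - {y. poly f (const_mp y) = 0} = {y. poly f (const_mp y) \<noteq> 0}"
    by auto
  ultimately show ?thesis
    by simp
qed

lemma exists_smult_square_factorization:
  fixes f :: "rmpoly poly"
  assumes f: "bounded_exps_poly n E f"
    and squares: "\<forall>y. \<exists>p. poly f (const_mp y) = p^2"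
    and ys: "inj_on ys {..degree f}"
    and roots: "\<And>j. j \<le> degree f \<Longrightarrow> poly f (const_mp (ys j)) = q j ^ 2"
    and q: "\<And>j. j \<le> degree f \<Longrightarrow> q j \<noteq> 0 \<and> bounded_exps n E (q j)"
  shows "\<exists>g h. bounded_exps_poly n E h \<and> f = map_poly const_mp g * h^2"
proof -
  \<comment> \<open>\<open>f\<close> and \<open>g h\<^sup>2\<close> have exponents at most \<open>2E\<close>, so the substitution separates them.\<close>
  define D where "D = 2 * E + 1"
  have q_kron: "kron n D (q j) \<noteq> 0" if "j \<le> degree f" for j
    using q[OF that] kron_eq_0_imp_eq_0[of n E "q j" D] by (auto simp: D_def)
  obtain g H where factor: "kron_poly n D f = smult g (H^2)"
    using cofinitely_square_imp_smult_square cofinitely_square_kron_poly[OF squares] by blast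
  obtain h where h: "bounded_exps_poly n E h" "kron_poly n D h = H"
    using square_factor_in_kron_poly_image[OF factor ys roots q_kron] q by blast
  have "f = map_poly const_mp g * h^2"
  proof (rule kron_poly_inj)
    show "bounded_exps_poly n (E + E) f"
      using f by (rule bounded_exps_poly_mono) simp
    show "bounded_exps_poly n (E + E) (map_poly const_mp g * h^2)"
      using bounded_exps_poly_mult[OF bounded_exps_poly_map_const_mp bounded_exps_poly_mult[OF h(1) h(1)]]
      by (simp add: power2_eq_square)
    show "E + E < D"
      by (simp add: D_def)
    show "kron_poly n D f = kron_poly n D (map_poly const_mp g * h^2)"
      by (simp add: factor kron_poly_mult kron_poly_map_const_mp h(2) power2_eq_square)
  qed
  with h(1) show ?thesis
    by blast
qed

lemma exists_nonzero_square_specializations: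
  fixes f :: "rmpoly poly"
  assumes "f \<noteq> 0" "\<forall>y0. \<exists>q. in_vars n q \<and> poly f (const_mp y0) = q^2"
  shows "\<exists>(ys :: nat \<Rightarrow> real) q. inj ys \<and>
    (\<forall>j. in_vars n (q j) \<and> q j \<noteq> 0 \<and> poly f (const_mp (ys j)) = q j ^ 2)"
proof -
  obtain ys :: "nat \<Rightarrow> real" where ys: "inj ys" "range ys \<subseteq> {y. poly f (const_mp y) \<noteq> 0}"
    using infinite_countable_subset[OF infinite_nonzero_eval_const_mp[OF assms(1)]] by blast
  have "\<forall>j. \<exists>p. in_vars n p \<and> poly f (const_mp (ys j)) = p^2"
    using assms(2) by blast
  from choice[OF this] obtain q where q: "\<And>j. in_vars n (q j) \<and> poly f (const_mp (ys j)) = q j ^ 2"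
    by blast
  have "q j \<noteq> 0" for j
  proof
    assume "q j = 0"
    then have "poly f (const_mp (ys j)) = 0"
      using q[of j] by simp
    then show False
      using ys(2) by blast
  qed
  then show ?thesis
    using ys(1) q by blast
qed

lemma exists_common_bounded_exps:
  fixes f :: "rmpoly poly" and q :: "nat \<Rightarrow> rmpoly" and d :: nat
  assumes "\<forall>i. in_vars n (coeff f i)" "\<forall>j. in_vars n (q j)"
  shows "\<exists>E. bounded_exps_poly n E f \<and> (\<forall>j\<le>d. bounded_exps n E (q j))"
proof -
  have "finite (coeff f ` {..degree f} \<union> q ` {..d})"
    "\<forall>p \<in> coeff f ` {..degree f} \<union> q ` {..d}. in_vars n p"
    using assms by auto
  then obtain E where E: "\<forall>p \<in> coeff f ` {..degree f} \<union> q ` {..d}. bounded_exps n E p"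
    by (rule in_vars_imp_uniformly_bounded_exps[THEN exE])
  have "bounded_exps n E (coeff f i)" for i
  proof (cases "i \<le> degree f")
    case True
    then show ?thesis
      using E by blast
  next
    case False
    then show ?thesis
      by (simp add: coeff_eq_0)
  qed
  moreover have "\<forall>j\<le>d. bounded_exps n E (q j)"
    using E by blast
  ultimately show ?thesis
    unfolding bounded_exps_poly_def by blast
qed

theorem lemma4p3:
  fixes n :: nat and f :: "rmpoly poly"
  assumes "\<forall>i. in_vars n (coeff f i)"
    and "\<forall>y0::real. \<exists>q. in_vars n q \<and> poly f (const_mp y0) = q ^ 2"
  shows "\<exists>(g :: real poly) (h :: rmpoly poly).
           (\<forall>i. in_vars n (coeff h i)) \<and> f = map_poly const_mp g * h ^ 2"
proof (cases "f = 0")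
  case True
  then have "(\<forall>i. in_vars n (coeff 0 i)) \<and> f = map_poly const_mp 0 * 0 ^ 2"
    by (simp add: in_vars_def)
  then show ?thesis by blast
next
  case False
  obtain ys :: "nat \<Rightarrow> real" and q where ys: "inj ys"
    and q: "\<forall>j. in_vars n (q j) \<and> q j \<noteq> 0 \<and> poly f (const_mp (ys j)) = q j ^ 2"
    using exists_nonzero_square_specializations[OF False assms(2)] by blast
  obtain E where "bounded_exps_poly n E f" "\<forall>j\<le>degree f. bounded_exps n E (q j)"
    using exists_common_bounded_exps[OF assms(1)] q by blast
  moreover have "inj_on ys {..degree f}"
    using ys by (metis inj_on_subset subset_UNIV)
  ultimately obtain g h where "bounded_exps_poly n E h" "f = map_poly const_mp g * h^2"
    using exists_smult_square_factorization[of n E f ys q] assms(2) q by blast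
  then show ?thesis
    using bounded_exps_imp_in_vars unfolding bounded_exps_poly_def by blast
qed

end
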